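(* Let $F(\rho,\eta)$ be a smooth function on an open subset of the half-plane $\{\rho>0\}$ satisfying $F_{\rho\rho}+F_{\eta\eta}=\frac{3F}{4\rho^2}$ (i.e. $F$ is an eigenfunction with eigenvalue $3/4$ of the hyperbolic Laplacian $\rho^2(\partial_\rho^2+\partial_\eta^2)$), and let $\varphi$ be a twistor, i.e. $\varphi=c_0m_0+c_1m_1$ with $c_0=-(a\eta-b)/\sqrt\rho$, $c_1=a\sqrt\rho$ for some constants $a,b\in\mathbb{R}$. Define $$\Phi=\tfrac12F\,\flat\varphi+dF\cdot\varphi,$$ where $\flat\varphi=c_0\mu_0+c_1\mu_1$ and $dF\cdot\varphi=\rho F_\rho(c_0\mu_0-c_1\mu_1)+\rho F_\eta(c_1\mu_0+c_0\mu_1)$. Then $\Phi$ is a solution of the Joyce equation; explicitly, writing $\Phi=A_0\mu_0+A_1\mu_1$, i.e. $$A_0=(\tfrac12F+\rho F_\rho)c_0+\rho F_\eta c_1,\qquad A_1=\rho F_\eta c_0+(\tfrac12F-\rho F_\rho)c_1,$$ one has $(A_0)_\rho+(A_1)_\eta=A_0/\rho$ and $(A_0)_\eta-(A_1)_\rho=0$.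
   Context: Setting: the hyperbolic plane in half-space coordinates $(\rho>0,\eta)$ with metric $(d\rho^2+d\eta^2)/\rho^2$. Its spinor bundle $\mathcal W$ is a real rank-$2$ bundle with orthonormal frame $m_0,m_1$ and dual coframe $\mu_0,\mu_1$ of $\mathcal W^*$, where $T^*\mathcal H^2$ is identified with trace-free symmetric products via $\mu_0^2-\mu_1^2=d\rho/\rho$, $2\mu_0\mu_1=d\eta/\rho$; then $dF=\rho F_\rho(\mu_0^2-\mu_1^2)+2\rho F_\eta\mu_0\mu_1$, and $dF\cdot\varphi$ is the natural contraction $T^*\mathcal H^2\otimes\mathcal W\to\mathcal W^*$ (given explicitly in the claim), while $\flat$ is the metric isomorphism $\mathcal W\to\mathcal W^*$ sending $m_i\mapsto\mu_i$. Twistors are the sections of $\mathcal W$ of the stated form (the "constant" sections in the model $\mathcal W=\mathcal H^2\times\mathbb{R}^2$). The Joyce equation for a section $\Phi=A_0\mu_0+A_1\mu_1$ of $\mathcal W^*$ is the system $(A_0)_\rho+(A_1)_\eta=A_0/\rho$, $(A_0)_\eta-(A_1)_\rho=0$. *)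

theory Defs
  imports "HOL-Analysis.Analysis"
begin

definition half_plane :: "(real \<times> real) set" where
  "half_plane = {p. fst p > 0}"

definition d_rho :: "(real \<times> real \<Rightarrow> real) \<Rightarrow> real \<times> real \<Rightarrow> real" where
  "d_rho f p = deriv (\<lambda>t. f (t, snd p)) (fst p)"

definition d_eta :: "(real \<times> real \<Rightarrow> real) \<Rightarrow> real \<times> real \<Rightarrow> real" where
  "d_eta f p = deriv (\<lambda>t. f (fst p, t)) (snd p)"

text \<open>Smoothness (C-infinity) on a set U: f is (Frechet) differentiable at every point
  of U with partial derivatives f1, f2 which are again smooth on U.\<close>
coinductive smooth_on2 :: "(real \<times> real) set \<Rightarrow> (real \<times> real \<Rightarrow> real) \<Rightarrow> bool"
  for U where
  "\<lbrakk> \<forall>p\<in>U. (f has_derivative (\<lambda>h. fst h * f1 p + snd h * f2 p)) (at p);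
     smooth_on2 U f1; smooth_on2 U f2 \<rbrakk> \<Longrightarrow> smooth_on2 U f"

text \<open>Sections of W and W^* are given by their coefficient pairs w.r.t. the frames
  m0, m1 resp. mu0, mu1.\<close>
type_synonym sect = "real \<times> real \<Rightarrow> real \<times> real"

definition twistor :: "real \<Rightarrow> real \<Rightarrow> sect" where
  "twistor a b p = (- (a * snd p - b) / sqrt (fst p), a * sqrt (fst p))"

text \<open>The metric isomorphism flat : W \<rightarrow> W^*, m_i \<mapsto> mu_i.\<close>
definition flat :: "sect \<Rightarrow> sect" where
  "flat \<phi> p = \<phi> p"

definition dF_dot :: "(real \<times> real \<Rightarrow> real) \<Rightarrow> sect \<Rightarrow> sect" where
  "dF_dot F \<phi> p =
     (let c0 = fst (\<phi> p); c1 = snd (\<phi> p); r = fst p in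
      (r * d_rho F p * c0 + r * d_eta F p * c1,
       - r * d_rho F p * c1 + r * d_eta F p * c0))"

definition Phi :: "(real \<times> real \<Rightarrow> real) \<Rightarrow> sect \<Rightarrow> sect" where
  "Phi F \<phi> p = (1/2 * F p * fst (flat \<phi> p) + fst (dF_dot F \<phi> p),
                1/2 * F p * snd (flat \<phi> p) + snd (dF_dot F \<phi> p))"

definition joyce_solution :: "(real \<times> real) set \<Rightarrow> sect \<Rightarrow> bool" where
  "joyce_solution U \<Phi> \<longleftrightarrow>
     (\<forall>p\<in>U. (\<lambda>q. fst (\<Phi> q)) differentiable (at p) \<and> (\<lambda>q. snd (\<Phi> q)) differentiable (at p) \<and>
       d_rho (\<lambda>q. fst (\<Phi> q)) p + d_eta (\<lambda>q. snd (\<Phi> q)) p = fst (\<Phi> p) / fst p \<and>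
       d_eta (\<lambda>q. fst (\<Phi> q)) p - d_rho (\<lambda>q. snd (\<Phi> q)) p = 0)"

end

theory Submission
  imports Defs
begin

text \<open>Twistors are exactly the solutions of the first-order system
  \<open>\<partial>\<^sub>\<rho>c\<^sub>0 = -c\<^sub>0/(2\<rho>)\<close>, \<open>\<partial>\<^sub>\<eta>c\<^sub>0 = -c\<^sub>1/\<rho>\<close>,
  \<open>\<partial>\<^sub>\<rho>c\<^sub>1 = c\<^sub>1/(2\<rho>)\<close>, \<open>\<partial>\<^sub>\<eta>c\<^sub>1 = 0\<close>.
  Differentiating \<open>A\<^sub>0\<close> and \<open>A\<^sub>1\<close> by the product rule and using this system to
  eliminate the derivatives of \<open>c\<^sub>0, c\<^sub>1\<close>, the two Joyce expressions become
  \<open>\<rho>(c\<^sub>0 L + c\<^sub>1 M)\<close> and \<open>\<rho>(c\<^sub>1 L - c\<^sub>0 M)\<close> with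
  \<open>L = F\<^sub>\<rho>\<^sub>\<rho> + F\<^sub>\<eta>\<^sub>\<eta> - 3F/(4\<rho>\<^sup>2)\<close> and \<open>M = \<partial>\<^sub>\<rho>(F\<^sub>\<eta>) - \<partial>\<^sub>\<eta>(F\<^sub>\<rho>)\<close>.
  Here \<open>L\<close> vanishes by the eigenvalue equation and \<open>M\<close> by the symmetry of second
  derivatives, which is proved by the mean value theorem applied twice to a second difference.\<close>

definition has_partials :: "(real \<times> real \<Rightarrow> real) \<Rightarrow> real \<Rightarrow> real \<Rightarrow> real \<times> real \<Rightarrow> bool" where
  "has_partials f A B p \<longleftrightarrow> (f has_derivative (\<lambda>h. fst h * A + snd h * B)) (at p)"

lemma has_partials_DERIV_rho:
  assumes "has_partials f A B (x, y)"
  shows "((\<lambda>t. f (t, y)) has_real_derivative A) (at x)"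
proof -
  have "((\<lambda>t. (t, y)) has_derivative (\<lambda>h. (h, 0))) (at x)"
    by (auto intro!: derivative_eq_intros)
  from has_derivative_compose[OF this assms[unfolded has_partials_def]]
  show ?thesis
    unfolding has_field_derivative_def by (rule has_derivative_eq_rhs) (auto simp: fun_eq_iff)
qed

lemma has_partials_DERIV_eta:
  assumes "has_partials f A B (x, y)"
  shows "((\<lambda>t. f (x, t)) has_real_derivative B) (at y)"
proof -
  have "((\<lambda>t. (x, t)) has_derivative (\<lambda>h. (0, h))) (at y)"
    by (auto intro!: derivative_eq_intros)
  from has_derivative_compose[OF this assms[unfolded has_partials_def]]
  show ?thesis
    unfolding has_field_derivative_def by (rule has_derivative_eq_rhs) (auto simp: fun_eq_iff)
qed

lemma has_partials_imp_d_rho: "has_partials f A B p \<Longrightarrow> d_rho f p = A"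
  unfolding d_rho_def by (cases p) (auto intro: DERIV_imp_deriv has_partials_DERIV_rho)

lemma has_partials_imp_d_eta: "has_partials f A B p \<Longrightarrow> d_eta f p = B"
  unfolding d_eta_def by (cases p) (auto intro: DERIV_imp_deriv has_partials_DERIV_eta)

lemma has_partials_imp_differentiable: "has_partials f A B p \<Longrightarrow> f differentiable (at p)"
  unfolding has_partials_def differentiable_def by blast

lemma has_partials_cong: "has_partials f A B p \<Longrightarrow> A = A' \<Longrightarrow> B = B' \<Longrightarrow> has_partials f A' B' p"
  by simp

lemma has_partials_transform_within_open:
  assumes "has_partials f A B p" "open U" "p \<in> U" "\<And>q. q \<in> U \<Longrightarrow> f q = g q"
  shows "has_partials g A B p"
  using has_derivative_transform_within_open[OF assms(1)[unfolded has_partials_def] assms(2,3)] assms(4)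
  unfolding has_partials_def by blast

lemma has_partials_const: "has_partials (\<lambda>q. c) 0 0 p"
  unfolding has_partials_def by (rule has_derivative_eq_rhs[OF has_derivative_const]) simp

lemma has_partials_fst: "has_partials fst 1 0 p"
  unfolding has_partials_def by (rule has_derivative_eq_rhs[OF has_derivative_fst[OF has_derivative_ident]]) simp

lemma has_partials_snd: "has_partials snd 0 1 p"
  unfolding has_partials_def by (rule has_derivative_eq_rhs[OF has_derivative_snd[OF has_derivative_ident]]) simp

lemma has_partials_add:
  assumes "has_partials f A B p" "has_partials g C D p"
  shows "has_partials (\<lambda>q. f q + g q) (A + C) (B + D) p"
  using has_derivative_add[OF assms[unfolded has_partials_def]] unfolding has_partials_def
  by (rule has_derivative_eq_rhs) (simp add: fun_eq_iff algebra_simps)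

lemma has_partials_diff:
  assumes "has_partials f A B p" "has_partials g C D p"
  shows "has_partials (\<lambda>q. f q - g q) (A - C) (B - D) p"
  using has_derivative_diff[OF assms[unfolded has_partials_def]] unfolding has_partials_def
  by (rule has_derivative_eq_rhs) (simp add: fun_eq_iff algebra_simps)

lemma has_partials_minus: "has_partials f A B p \<Longrightarrow> has_partials (\<lambda>q. - f q) (- A) (- B) p"
  unfolding has_partials_def
  by (erule has_derivative_eq_rhs[OF has_derivative_minus]) (simp add: fun_eq_iff)

lemma has_partials_mult:
  assumes "has_partials f A B p" "has_partials g C D p"
  shows "has_partials (\<lambda>q. f q * g q) (f p * C + A * g p) (f p * D + B * g p) p"
  using has_derivative_mult[OF assms[unfolded has_partials_def]] unfolding has_partials_def
  by (rule has_derivative_eq_rhs) (simp add: fun_eq_iff algebra_simps)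

lemma has_partials_compose:
  assumes "(g has_real_derivative g') (at (f p))" "has_partials f A B p"
  shows "has_partials (\<lambda>q. g (f q)) (g' * A) (g' * B) p"
  using has_derivative_compose[OF assms(2)[unfolded has_partials_def] assms(1)[unfolded has_field_derivative_def]]
  unfolding has_partials_def by (rule has_derivative_eq_rhs) (simp add: fun_eq_iff algebra_simps)

lemma second_difference_mean_value:
  fixes f f1 f12 :: "real \<Rightarrow> real \<Rightarrow> real"
  assumes "0 < h"
    and f1: "\<And>x y. x0 \<le> x \<Longrightarrow> x \<le> x0 + h \<Longrightarrow> y0 \<le> y \<Longrightarrow> y \<le> y0 + h \<Longrightarrow>
      ((\<lambda>x. f x y) has_real_derivative f1 x y) (at x)"
    and f12: "\<And>x y. x0 \<le> x \<Longrightarrow> x \<le> x0 + h \<Longrightarrow> y0 \<le> y \<Longrightarrow> y \<le> y0 + h \<Longrightarrow>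
      ((\<lambda>y. f1 x y) has_real_derivative f12 x y) (at y)"
  obtains \<xi> \<zeta> where "x0 < \<xi>" "\<xi> < x0 + h" "y0 < \<zeta>" "\<zeta> < y0 + h"
    "f (x0 + h) (y0 + h) - f (x0 + h) y0 - f x0 (y0 + h) + f x0 y0 = h\<^sup>2 * f12 \<xi> \<zeta>"
proof -
  have "((\<lambda>x. f x (y0 + h) - f x y0) has_real_derivative f1 x (y0 + h) - f1 x y0) (at x)"
    if "x0 \<le> x" "x \<le> x0 + h" for x
    using that \<open>0 < h\<close> by (auto intro!: DERIV_diff f1)
  then obtain \<xi> where \<xi>: "x0 < \<xi>" "\<xi> < x0 + h"
    and "(f (x0 + h) (y0 + h) - f (x0 + h) y0) - (f x0 (y0 + h) - f x0 y0)
      = h * (f1 \<xi> (y0 + h) - f1 \<xi> y0)"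
    using MVT2[of x0 "x0 + h"] \<open>0 < h\<close> by fastforce
  moreover obtain \<zeta> where "y0 < \<zeta>" "\<zeta> < y0 + h" "f1 \<xi> (y0 + h) - f1 \<xi> y0 = h * f12 \<xi> \<zeta>"
    using MVT2[of y0 "y0 + h" "f1 \<xi>" "f12 \<xi>"] \<open>0 < h\<close> \<xi> f12 by fastforce
  ultimately show ?thesis
    using that[of \<xi> \<zeta>] by (simp add: power2_eq_square)
qed

lemma mixed_partials_eq:
  fixes f f1 f2 f12 f21 :: "real \<times> real \<Rightarrow> real"
  assumes "open U" "p \<in> U"
    and f1: "\<And>x y. (x, y) \<in> U \<Longrightarrow> ((\<lambda>x. f (x, y)) has_real_derivative f1 (x, y)) (at x)"
    and f2: "\<And>x y. (x, y) \<in> U \<Longrightarrow> ((\<lambda>y. f (x, y)) has_real_derivative f2 (x, y)) (at y)"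
    and f12: "\<And>x y. (x, y) \<in> U \<Longrightarrow> ((\<lambda>y. f1 (x, y)) has_real_derivative f12 (x, y)) (at y)"
    and f21: "\<And>x y. (x, y) \<in> U \<Longrightarrow> ((\<lambda>x. f2 (x, y)) has_real_derivative f21 (x, y)) (at x)"
    and "isCont f12 p" "isCont f21 p"
  shows "f12 p = f21 p"
proof -
  obtain x0 y0 where p: "p = (x0, y0)" by (cases p)
  have "\<bar>f12 p - f21 p\<bar> < 2 * e" if "e > 0" for e
  proof -
    have "(f12 \<longlongrightarrow> f12 p) (nhds p)" "(f21 \<longlongrightarrow> f21 p) (nhds p)"
      using \<open>isCont f12 p\<close> \<open>isCont f21 p\<close> by (simp_all only: isCont_def tendsto_at_iff_tendsto_nhds)
    then have "\<forall>\<^sub>F q in nhds p. q \<in> U \<and> dist (f12 q) (f12 p) < e \<and> dist (f21 q) (f21 p) < e"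
      using eventually_nhds_in_open[OF \<open>open U\<close> \<open>p \<in> U\<close>] \<open>e > 0\<close>
      by (intro eventually_conj tendstoD)
    then obtain d where "d > 0"
      and near: "\<And>q. dist q p < d \<Longrightarrow> q \<in> U \<and> dist (f12 q) (f12 p) < e \<and> dist (f21 q) (f21 p) < e"
      unfolding eventually_nhds_metric by blast
    define h where "h = d / 3"
    have "h > 0" using \<open>d > 0\<close> by (simp add: h_def)
    have square: "dist (x, y) p < d" if "x0 \<le> x" "x \<le> x0 + h" "y0 \<le> y" "y \<le> y0 + h" for x y
    proof -
      have "dist (x, y) p \<le> \<bar>x - x0\<bar> + \<bar>y - y0\<bar>"
        unfolding p by (simp add: dist_Pair_Pair dist_real_def sqrt_sum_squares_le_sum_abs)
      also have "\<dots> < d" using that \<open>d > 0\<close> by (simp add: h_def)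
      finally show ?thesis .
    qed
    have in_U: "(x, y) \<in> U" if "x0 \<le> x" "x \<le> x0 + h" "y0 \<le> y" "y \<le> y0 + h" for x y
      using near[OF square[OF that]] by blast
    obtain \<xi> \<zeta> where \<xi>\<zeta>: "x0 < \<xi>" "\<xi> < x0 + h" "y0 < \<zeta>" "\<zeta> < y0 + h"
      and \<Delta>12: "f (x0 + h, y0 + h) - f (x0 + h, y0) - f (x0, y0 + h) + f (x0, y0) = h\<^sup>2 * f12 (\<xi>, \<zeta>)"
      by (rule second_difference_mean_value[of h x0 y0 "\<lambda>x y. f (x, y)" "\<lambda>x y. f1 (x, y)"])
        (use \<open>h > 0\<close> in \<open>auto intro: f1 f12 in_U\<close>)
    \<comment> \<open>The same second difference, with the roles of the two variables exchanged.\<close>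
    obtain \<zeta>' \<xi>' where \<xi>\<zeta>': "y0 < \<zeta>'" "\<zeta>' < y0 + h" "x0 < \<xi>'" "\<xi>' < x0 + h"
      and \<Delta>21: "f (x0 + h, y0 + h) - f (x0, y0 + h) - f (x0 + h, y0) + f (x0, y0) = h\<^sup>2 * f21 (\<xi>', \<zeta>')"
      by (rule second_difference_mean_value[of h y0 x0 "\<lambda>y x. f (x, y)" "\<lambda>y x. f2 (x, y)"])
        (use \<open>h > 0\<close> in \<open>auto intro: f2 f21 in_U\<close>)
    have "h\<^sup>2 * f12 (\<xi>, \<zeta>) = h\<^sup>2 * f21 (\<xi>', \<zeta>')"
      using \<Delta>12 \<Delta>21 by linarith
    then have "f12 (\<xi>, \<zeta>) = f21 (\<xi>', \<zeta>')"
      using \<open>h > 0\<close> by simp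
    moreover have "dist (\<xi>, \<zeta>) p < d" "dist (\<xi>', \<zeta>') p < d"
      using \<xi>\<zeta> \<xi>\<zeta>' by (auto intro!: square)
    ultimately show ?thesis
      using near[of "(\<xi>, \<zeta>)"] near[of "(\<xi>', \<zeta>')"] unfolding dist_real_def by linarith
  qed
  from this[of "\<bar>f12 p - f21 p\<bar> / 2"] show ?thesis
    by (cases "f12 p = f21 p") auto
qed

lemma smooth_on2_has_partials:
  assumes "smooth_on2 U f" "p \<in> U"
  shows "has_partials f (d_rho f p) (d_eta f p) p"
  using assms
proof (cases rule: smooth_on2.cases)
  case (1 f1 f2)
  then have "has_partials f (f1 p) (f2 p) p"
    using \<open>p \<in> U\<close> unfolding has_partials_def by blast
  then show ?thesis
    using has_partials_imp_d_rho has_partials_imp_d_eta by metis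
qed

lemma smooth_on2_isCont: "smooth_on2 U f \<Longrightarrow> p \<in> U \<Longrightarrow> isCont f p"
  using smooth_on2_has_partials has_partials_def has_derivative_continuous by blast

lemma smooth_on2_cong:
  assumes "open U" "smooth_on2 U f" "\<And>q. q \<in> U \<Longrightarrow> f q = g q"
  shows "smooth_on2 U g"
  using assms(2,3)
proof (coinduction arbitrary: f g)
  case (smooth_on2 f g)
  from \<open>smooth_on2 U f\<close> obtain f1 f2
    where "\<forall>p\<in>U. has_partials f (f1 p) (f2 p) p" "smooth_on2 U f1" "smooth_on2 U f2"
    unfolding has_partials_def by (cases rule: smooth_on2.cases) blast
  moreover have "\<forall>p\<in>U. has_partials g (f1 p) (f2 p) p"
    using calculation(1) has_partials_transform_within_open[OF _ \<open>open U\<close>] smooth_on2(2) by blast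
  ultimately show ?case
    unfolding has_partials_def by blast
qed

lemma smooth_on2_d_rho:
  assumes "open U" "smooth_on2 U f"
  shows "smooth_on2 U (d_rho f)"
  using assms(2)
proof (cases rule: smooth_on2.cases)
  case (1 f1 f2)
  then have "d_rho f q = f1 q" if "q \<in> U" for q
    using that has_partials_imp_d_rho unfolding has_partials_def by blast
  then show ?thesis
    using smooth_on2_cong[OF \<open>open U\<close> \<open>smooth_on2 U f1\<close>] by metis
qed

lemma smooth_on2_d_eta:
  assumes "open U" "smooth_on2 U f"
  shows "smooth_on2 U (d_eta f)"
  using assms(2)
proof (cases rule: smooth_on2.cases)
  case (1 f1 f2)
  then have "d_eta f q = f2 q" if "q \<in> U" for q
    using that has_partials_imp_d_eta unfolding has_partials_def by blast
  then show ?thesis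
    using smooth_on2_cong[OF \<open>open U\<close> \<open>smooth_on2 U f2\<close>] by metis
qed

lemma smooth_on2_mixed_partials:
  assumes "open U" "smooth_on2 U f" "p \<in> U"
  shows "d_eta (d_rho f) p = d_rho (d_eta f) p"
proof (rule mixed_partials_eq[OF \<open>open U\<close> \<open>p \<in> U\<close>])
  have smooth: "smooth_on2 U (d_rho f)" "smooth_on2 U (d_eta f)"
    using assms smooth_on2_d_rho smooth_on2_d_eta by blast+
  show "isCont (d_eta (d_rho f)) p" "isCont (d_rho (d_eta f)) p"
    using smooth_on2_d_eta[OF \<open>open U\<close> smooth(1)] smooth_on2_d_rho[OF \<open>open U\<close> smooth(2)] \<open>p \<in> U\<close>
    by (blast intro: smooth_on2_isCont)+
  fix x y assume "(x, y) \<in> U"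
  then show "((\<lambda>x. f (x, y)) has_real_derivative d_rho f (x, y)) (at x)"
    and "((\<lambda>y. f (x, y)) has_real_derivative d_eta f (x, y)) (at y)"
    and "((\<lambda>y. d_rho f (x, y)) has_real_derivative d_eta (d_rho f) (x, y)) (at y)"
    and "((\<lambda>x. d_eta f (x, y)) has_real_derivative d_rho (d_eta f) (x, y)) (at x)"
    using assms(2) smooth
    by (blast intro: has_partials_DERIV_rho has_partials_DERIV_eta smooth_on2_has_partials)+
qed

text \<open>The twistor equation in the coordinates \<open>(\<rho>, \<eta>)\<close>; its solutions on a connected
  open subset of the half-plane are exactly the sections \<^const>\<open>twistor\<close> \<open>a b\<close>.\<close>

definition twistor_equation :: "(real \<times> real) set \<Rightarrow> sect \<Rightarrow> bool" where
  "twistor_equation U \<phi> \<longleftrightarrow> (\<forall>p\<in>U.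
     has_partials (\<lambda>q. fst (\<phi> q)) (- fst (\<phi> p) / (2 * fst p)) (- snd (\<phi> p) / fst p) p \<and>
     has_partials (\<lambda>q. snd (\<phi> q)) (snd (\<phi> p) / (2 * fst p)) 0 p)"

lemma twistor_equation_twistor:
  assumes "U \<subseteq> half_plane"
  shows "twistor_equation U (twistor a b)"
  unfolding twistor_equation_def
proof (intro ballI conjI)
  fix p assume "p \<in> U"
  then have "fst p > 0"
    using assms by (auto simp: half_plane_def)
  have sqrt: "has_partials (\<lambda>q. sqrt (fst q)) (1 / (2 * sqrt (fst p))) 0 p"
    by (rule has_partials_cong[OF has_partials_compose[OF DERIV_real_sqrt[OF \<open>fst p > 0\<close>]
          has_partials_fst]]) (simp_all add: field_simps)
  have inverse_sqrt: "has_partials (\<lambda>q. inverse (sqrt (fst q))) (- 1 / (2 * fst p * sqrt (fst p))) 0 p"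
    by (rule has_partials_cong[OF has_partials_compose[OF DERIV_inverse[of "sqrt (fst p)"] sqrt]])
      (use \<open>fst p > 0\<close> in \<open>simp_all add: field_simps power2_eq_square\<close>)
  show "has_partials (\<lambda>q. fst (twistor a b q))
      (- fst (twistor a b p) / (2 * fst p)) (- snd (twistor a b p) / fst p) p"
    unfolding twistor_def fst_conv snd_conv divide_inverse
    by (rule has_partials_cong, (rule has_partials_mult has_partials_minus has_partials_diff
        has_partials_const has_partials_snd inverse_sqrt)+)
      (use \<open>fst p > 0\<close> in \<open>simp_all add: field_simps real_sqrt_mult_self\<close>)
  show "has_partials (\<lambda>q. snd (twistor a b q)) (snd (twistor a b p) / (2 * fst p)) 0 p"
    unfolding twistor_def fst_conv snd_conv
    by (rule has_partials_cong, (rule has_partials_mult has_partials_const sqrt)+)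
      (use \<open>fst p > 0\<close> in \<open>simp_all add: field_simps\<close>)
qed

lemma has_partials_Phi:
  fixes F :: "real \<times> real \<Rightarrow> real" and \<phi> :: sect and p :: "real \<times> real"
  defines "r \<equiv> fst p" and "c0 \<equiv> fst (\<phi> p)" and "c1 \<equiv> snd (\<phi> p)"
  assumes "twistor_equation U \<phi>" "p \<in> U" "r \<noteq> 0"
    and F: "has_partials F (d_rho F p) (d_eta F p) p"
    and F1: "has_partials (d_rho F) F11 F12 p" and F2: "has_partials (d_eta F) F21 F22 p"
  shows "has_partials (\<lambda>q. fst (Phi F \<phi> q))
      (c0 * (d_rho F p + r * F11 - F p / (4 * r)) + c1 * (3 / 2 * d_eta F p + r * F21))
      (c0 * (d_eta F p / 2 + r * F12) + c1 * (r * F22 - d_rho F p - F p / (2 * r))) p"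
    and "has_partials (\<lambda>q. snd (Phi F \<phi> q))
      (c0 * (d_eta F p / 2 + r * F21) + c1 * (F p / (4 * r) - d_rho F p - r * F11))
      (c0 * r * F22 - c1 * (d_eta F p / 2 + r * F12)) p"
proof -
  have c0: "has_partials (\<lambda>q. fst (\<phi> q)) (- c0 / (2 * r)) (- c1 / r) p"
    and c1: "has_partials (\<lambda>q. snd (\<phi> q)) (c1 / (2 * r)) 0 p"
    using assms(4,5) unfolding twistor_equation_def r_def c0_def c1_def by auto
  note rules = has_partials_add has_partials_mult has_partials_minus has_partials_const
    has_partials_fst F F1 F2 c0 c1
  show "has_partials (\<lambda>q. fst (Phi F \<phi> q))
      (c0 * (d_rho F p + r * F11 - F p / (4 * r)) + c1 * (3 / 2 * d_eta F p + r * F21))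
      (c0 * (d_eta F p / 2 + r * F12) + c1 * (r * F22 - d_rho F p - F p / (2 * r))) p"
    unfolding Phi_def flat_def dF_dot_def Let_def fst_conv snd_conv
    by (rule has_partials_cong, (rule rules)+)
      (use \<open>r \<noteq> 0\<close> in \<open>simp_all add: field_simps r_def c0_def c1_def\<close>)
  show "has_partials (\<lambda>q. snd (Phi F \<phi> q))
      (c0 * (d_eta F p / 2 + r * F21) + c1 * (F p / (4 * r) - d_rho F p - r * F11))
      (c0 * r * F22 - c1 * (d_eta F p / 2 + r * F12)) p"
    unfolding Phi_def flat_def dF_dot_def Let_def fst_conv snd_conv
    by (rule has_partials_cong, (rule rules)+)
      (use \<open>r \<noteq> 0\<close> in \<open>simp_all add: field_simps r_def c0_def c1_def\<close>)
qed

lemma joyce_solution_Phi: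
  assumes "open U" "U \<subseteq> half_plane" "smooth_on2 U F"
    and eigen: "\<forall>p\<in>U. d_rho (d_rho F) p + d_eta (d_eta F) p = 3 * F p / (4 * (fst p)\<^sup>2)"
    and "twistor_equation U \<phi>"
  shows "joyce_solution U (Phi F \<phi>)"
  unfolding joyce_solution_def
proof (intro ballI conjI)
  fix p assume "p \<in> U"
  then have "fst p > 0"
    using assms(2) by (auto simp: half_plane_def)
  have "smooth_on2 U (d_rho F)" "smooth_on2 U (d_eta F)"
    using assms(1,3) by (rule smooth_on2_d_rho, rule smooth_on2_d_eta)
  have "fst p \<noteq> 0"
    using \<open>fst p > 0\<close> by simp
  note partials = has_partials_Phi[OF \<open>twistor_equation U \<phi>\<close> \<open>p \<in> U\<close> \<open>fst p \<noteq> 0\<close>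
      smooth_on2_has_partials[OF \<open>smooth_on2 U F\<close> \<open>p \<in> U\<close>]
      smooth_on2_has_partials[OF \<open>smooth_on2 U (d_rho F)\<close> \<open>p \<in> U\<close>]
      smooth_on2_has_partials[OF \<open>smooth_on2 U (d_eta F)\<close> \<open>p \<in> U\<close>]]
  show "(\<lambda>q. fst (Phi F \<phi> q)) differentiable at p" "(\<lambda>q. snd (Phi F \<phi> q)) differentiable at p"
    by (fact has_partials_imp_differentiable[OF partials(1)] has_partials_imp_differentiable[OF partials(2)])+
  have mixed: "d_eta (d_rho F) p = d_rho (d_eta F) p"
    using assms(1,3) \<open>p \<in> U\<close> by (rule smooth_on2_mixed_partials)
  have laplace: "d_eta (d_eta F) p = 3 * F p / (4 * (fst p)\<^sup>2) - d_rho (d_rho F) p"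
    using bspec[OF eigen \<open>p \<in> U\<close>] by linarith
  show "d_rho (\<lambda>q. fst (Phi F \<phi> q)) p + d_eta (\<lambda>q. snd (Phi F \<phi> q)) p = fst (Phi F \<phi> p) / fst p"
    unfolding has_partials_imp_d_rho[OF partials(1)] has_partials_imp_d_eta[OF partials(2)] laplace mixed
    using \<open>fst p > 0\<close> by (simp add: Phi_def flat_def dF_dot_def Let_def field_simps power2_eq_square)
  show "d_eta (\<lambda>q. fst (Phi F \<phi> q)) p - d_rho (\<lambda>q. snd (Phi F \<phi> q)) p = 0"
    unfolding has_partials_imp_d_eta[OF partials(1)] has_partials_imp_d_rho[OF partials(2)] laplace mixed
    using \<open>fst p > 0\<close> by (simp add: field_simps power2_eq_square)
qed

theorem proposition7p1:
  fixes F :: "real \<times> real \<Rightarrow> real" and U :: "(real \<times> real) set" and a b :: real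
  assumes "open U" and "U \<subseteq> half_plane"
    and "smooth_on2 U F"
    and "\<forall>p\<in>U. d_rho (d_rho F) p + d_eta (d_eta F) p = 3 * F p / (4 * (fst p)\<^sup>2)"
  shows "joyce_solution U (Phi F (twistor a b))"
  using assms twistor_equation_twistor[OF assms(2)] by (rule joyce_solution_Phi)

end
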